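(* Let $m,n,k$ be positive integers with $(m,k-1)=1$ and $n=\mathrm{ind}_m(k)$, let $G=G(m,n,k)=\langle a,b;\ a^m=1,\ b^n=1,\ b^{-1}ab=a^k\rangle$, let $S\subseteq\mathbb{Z}_m$ be a base and let $x\in S^*$. Then $\mathrm{orb}(x,S^* )$ is basic if and only if the $x$-family $\mathcal{F}_G(x,S)$ is complete.
   Context: $\mathrm{ind}_m(k)$ is the least positive integer $d$ with $k^d\equiv 1\pmod m$. Elements of $G$ are written uniquely as $a^ib^j$, $i\in\mathbb{Z}_m$, $j\in\mathbb{Z}_n$; $k_t=k^t-1\pmod m$. Maps are written on the right and composed left to right. For $x,y\in\mathbb{Z}_m$, $\mu(x,y):G\to G$ is $(a^ib^j)\mu(x,y)=a^{xik^j-yk_j}$, and $C(x,y)=\{\mu(x,yz):z\in\mathbb{Z}_m\}$. For $S\subseteq\mathbb{Z}_m$, $I(S)$ is the set of elements of $S$ invertible in $\mathbb{Z}_m$ and $S^*$ is the multiplicative subsemigroup of $\mathbb{Z}_m$ generated by $S$. A base is $S\subseteq \mathbb{Z}_m$ with $0\in S$ and $I(S)\ne\varnothing$. $\Sigma_G(S)$ is the semigroup under composition generated by $\{\mu(s,z):s\in S,z\in\mathbb{Z}_m\}$. For $x\in S^*$, $Y(x)=\{s^*z: s^*\in S^*, z\in\mathbb{Z}_m, \exists s\in S,\ x\equiv ss^*\pmod m\}$, $\mathcal{F}_G(x,S)=\{C(x,y):y\in Y(x)\}$, and $\mathcal{F}_G(x,S)$ is complete if $C(x,1)\in\mathcal{F}_G(x,S)$.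 The orbit of $x$ is $\mathrm{orb}(x,S^* )=\{xy: y\in I(S^* )\}$, and it is basic if $\mathrm{orb}(x,S^* )\cap S\neq\varnothing$. *)

theory Defs
  imports "HOL-Number_Theory.Number_Theory" "HOL-Library.FuncSet"
begin

text \<open>Z_m is represented by the integers {0..<m}; the element a^i b^j of
G(m,n,k) is represented by the pair (i,j) with 0 \<le> i < m, 0 \<le> j < n.
The index ind_m(k) is the library notion ord m k.\<close>

definition Zm :: "nat \<Rightarrow> int set" where
  "Zm m = {0..<int m}"

definition Gcar :: "nat \<Rightarrow> nat \<Rightarrow> (int \<times> nat) set" where
  "Gcar m n = Zm m \<times> {0..<n}"

text \<open>(a^i b^j) mu(x,y) = a^(x i k^j - y k_j), k_j = k^j - 1 (mod m).\<close>
definition mu :: "nat \<Rightarrow> nat \<Rightarrow> nat \<Rightarrow> int \<Rightarrow> int \<Rightarrow> (int \<times> nat \<Rightarrow> int \<times> nat)" where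
  "mu m n k x y = restrict
     (\<lambda>(i, j). ((x * i * int k ^ j - y * (int k ^ j - 1)) mod int m, 0)) (Gcar m n)"

definition CC :: "nat \<Rightarrow> nat \<Rightarrow> nat \<Rightarrow> int \<Rightarrow> int \<Rightarrow> (int \<times> nat \<Rightarrow> int \<times> nat) set" where
  "CC m n k x y = {mu m n k x ((y * z) mod int m) | z. z \<in> Zm m}"

definition units_part :: "nat \<Rightarrow> int set \<Rightarrow> int set" where
  "units_part m S = {s \<in> S. coprime s (int m)}"

inductive_set semigen :: "nat \<Rightarrow> int set \<Rightarrow> int set" for m S where
  gen: "s \<in> S \<Longrightarrow> s \<in> semigen m S"
| mult: "a \<in> semigen m S \<Longrightarrow> b \<in> semigen m S \<Longrightarrow> (a * b) mod int m \<in> semigen m S"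

definition is_base :: "nat \<Rightarrow> int set \<Rightarrow> bool" where
  "is_base m S \<longleftrightarrow> S \<subseteq> Zm m \<and> 0 \<in> S \<and> units_part m S \<noteq> {}"

definition Yset :: "nat \<Rightarrow> int set \<Rightarrow> int \<Rightarrow> int set" where
  "Yset m S x = {(s' * z) mod int m | s' z. s' \<in> semigen m S \<and> z \<in> Zm m \<and>
        (\<exists>s\<in>S. [x = s * s'] (mod int m))}"

definition family :: "nat \<Rightarrow> nat \<Rightarrow> nat \<Rightarrow> int set \<Rightarrow> int \<Rightarrow> (int \<times> nat \<Rightarrow> int \<times> nat) set set" where
  "family m n k S x = {CC m n k x y | y. y \<in> Yset m S x}"

definition family_complete :: "nat \<Rightarrow> nat \<Rightarrow> nat \<Rightarrow> int set \<Rightarrow> int \<Rightarrow> bool" where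
  "family_complete m n k S x \<longleftrightarrow> CC m n k x 1 \<in> family m n k S x"

definition orb :: "nat \<Rightarrow> int set \<Rightarrow> int \<Rightarrow> int set" where
  "orb m T x = {(x * y) mod int m | y. y \<in> units_part m T}"

definition orb_basic :: "nat \<Rightarrow> int set \<Rightarrow> int \<Rightarrow> bool" where
  "orb_basic m S x \<longleftrightarrow> orb m (semigen m S) x \<inter> S \<noteq> {}"

end

theory Submission
  imports Defs
begin

text \<open>Both conditions are equivalent to the existence of \<open>s \<in> S\<close> and a unit \<open>u \<in> S\<^sup>*\<close>
with \<open>x \<equiv> s u\<close>. For the orbit this uses that the inverse of a unit of \<open>S\<^sup>*\<close>, being a power
of it, lies again in \<open>S\<^sup>*\<close>. For the family, \<open>C(x,y) = C(x,1)\<close> holds exactly when \<open>y\<close> is a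
unit: evaluating \<open>\<mu>(x, y z)\<close> at \<open>b\<close> gives \<open>a\<^bsup>-yz(k-1)\<^esup>\<close>, and \<open>k - 1\<close> is invertible
modulo \<open>m\<close>.\<close>

lemma euler_theorem_int:
  fixes a :: int
  assumes "coprime a (int m)"
  shows "[a ^ totient m = 1] (mod int m)"
proof (cases "m \<le> 1")
  case True
  then consider "m = 0" | "m = 1" by linarith
  then show ?thesis
    using assms by cases (auto simp: cong_def zmod_int)
next
  case False
  then have "residues (int m)" by (simp add: residues_def)
  from residues.euler_theorem[OF this assms] show ?thesis by simp
qed

lemma semigen_subset_Zm:
  assumes "S \<subseteq> Zm m" "0 < m"
  shows "semigen m S \<subseteq> Zm m"
proof
  fix a assume "a \<in> semigen m S"
  then show "a \<in> Zm m"
    by induction (use assms in \<open>auto simp: Zm_def\<close>)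
qed

lemma semigen_power_mod:
  assumes "S \<subseteq> Zm m" "0 < m" "a \<in> semigen m S"
  shows "a ^ Suc t mod int m \<in> semigen m S"
proof (induction t)
  case 0
  have "a \<in> Zm m" using semigen_subset_Zm assms by blast
  then show ?case using assms(3) by (simp add: Zm_def)
next
  case (Suc t)
  have "(a ^ Suc t mod int m * a) mod int m = a ^ Suc (Suc t) mod int m"
    by (metis mod_mult_left_eq power_Suc2)
  with semigen.mult[OF Suc assms(3)] show ?case by simp
qed

lemma semigen_unit_inverse:
  assumes "S \<subseteq> Zm m" "0 < m" "a \<in> semigen m S" "coprime a (int m)"
  obtains b where "b \<in> semigen m S" "coprime b (int m)" "[a * b = 1] (mod int m)"
proof -
  define T where "T = totient m"
  have "0 < T" using assms(2) by (simp add: T_def)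
  \<comment> \<open>The exponent \<open>2T - 1\<close> (not \<open>T - 1\<close>) is positive even for \<open>T = 1\<close>, where \<open>1\<close> need not lie in \<open>S\<^sup>*\<close>.\<close>
  define b where "b = a ^ Suc (2 * T - 2) mod int m"
  have "Suc (Suc (2 * T - 2)) = T * 2" using \<open>0 < T\<close> by simp
  then have "a * a ^ Suc (2 * T - 2) = (a ^ T) ^ 2"
    by (metis power_Suc power_mult)
  moreover have "[(a ^ T) ^ 2 = 1] (mod int m)"
    using cong_pow[OF euler_theorem_int[OF assms(4)], of 2] by (simp add: T_def)
  ultimately have inverse: "[a * b = 1] (mod int m)"
    unfolding b_def by (metis cong_def mod_mult_right_eq)
  then have "coprime b (int m)"
    by (metis cong_imp_coprime cong_sym coprime_1_left coprime_mult_left_iff)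
  moreover have "b \<in> semigen m S"
    unfolding b_def using semigen_power_mod assms(1-3) by blast
  ultimately show ?thesis using that inverse by blast
qed

lemma orb_basic_iff:
  assumes "S \<subseteq> Zm m" "0 < m"
  shows "orb_basic m S x \<longleftrightarrow>
    (\<exists>s\<in>S. \<exists>u\<in>semigen m S. coprime u (int m) \<and> [x = s * u] (mod int m))"
proof
  assume "orb_basic m S x"
  then obtain y where y: "y \<in> semigen m S" "coprime y (int m)" "(x * y) mod int m \<in> S"
    unfolding orb_basic_def orb_def units_part_def by blast
  obtain b where b: "b \<in> semigen m S" "coprime b (int m)" "[y * b = 1] (mod int m)"
    using semigen_unit_inverse[OF assms y(1,2)] .
  have "[(x * y) mod int m * b = x * (y * b)] (mod int m)"
    by (simp add: cong_def mod_mult_left_eq mult.assoc)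
  also have "[x * (y * b) = x] (mod int m)"
    using cong_mult[OF cong_refl b(3), of x] by simp
  finally show "\<exists>s\<in>S. \<exists>u\<in>semigen m S. coprime u (int m) \<and> [x = s * u] (mod int m)"
    using y(3) b(1,2) cong_sym by blast
next
  assume "\<exists>s\<in>S. \<exists>u\<in>semigen m S. coprime u (int m) \<and> [x = s * u] (mod int m)"
  then obtain s u where su: "s \<in> S" "u \<in> semigen m S" "coprime u (int m)"
      "[x = s * u] (mod int m)"
    by blast
  obtain b where b: "b \<in> semigen m S" "coprime b (int m)" "[u * b = 1] (mod int m)"
    using semigen_unit_inverse[OF assms su(2,3)] .
  have "[x * b = s * (u * b)] (mod int m)"
    using cong_mult[OF su(4) cong_refl, of b] by (simp add: mult.assoc)
  also have "[s * (u * b) = s] (mod int m)"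
    using cong_mult[OF cong_refl b(3), of s] by simp
  finally have "(x * b) mod int m = s"
    using assms su(1) by (auto simp: cong_def Zm_def)
  with su(1) b(1,2) show "orb_basic m S x"
    unfolding orb_basic_def orb_def units_part_def by blast
qed

lemma unit_in_Yset_iff:
  assumes "S \<subseteq> Zm m" "0 < m"
  shows "(\<exists>y\<in>Yset m S x. coprime y (int m)) \<longleftrightarrow>
    (\<exists>s\<in>S. \<exists>u\<in>semigen m S. coprime u (int m) \<and> [x = s * u] (mod int m))"
proof
  assume "\<exists>y\<in>Yset m S x. coprime y (int m)"
  then obtain s u z where unit: "coprime ((u * z) mod int m) (int m)"
      and su: "u \<in> semigen m S" "s \<in> S" "[x = s * u] (mod int m)"
    unfolding Yset_def by blast
  have "coprime u (int m)" using unit assms(2) by simp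
  with su show "\<exists>s\<in>S. \<exists>u\<in>semigen m S. coprime u (int m) \<and> [x = s * u] (mod int m)"
    by blast
next
  assume "\<exists>s\<in>S. \<exists>u\<in>semigen m S. coprime u (int m) \<and> [x = s * u] (mod int m)"
  then obtain s u where su: "s \<in> S" "u \<in> semigen m S" "coprime u (int m)"
      "[x = s * u] (mod int m)"
    by blast
  have "u \<in> Zm m" using semigen_subset_Zm[OF assms] su(2) by blast
  then have "u = (u * (1 mod int m)) mod int m"
    by (simp add: Zm_def mod_mult_right_eq)
  moreover have "1 mod int m \<in> Zm m" using assms(2) by (simp add: Zm_def)
  ultimately have "u \<in> Yset m S x"
    unfolding Yset_def using su by blast
  with su(3) show "\<exists>y\<in>Yset m S x. coprime y (int m)" by blast
qed

lemma mu_cong: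
  assumes "[y1 = y2] (mod int m)"
  shows "mu m n k x y1 = mu m n k x y2"
proof -
  have "[x * i * int k ^ j - y1 * (int k ^ j - 1)
       = x * i * int k ^ j - y2 * (int k ^ j - 1)] (mod int m)" for i j
    using assms by (intro cong_diff cong_mult cong_refl)
  then show ?thesis unfolding mu_def by (simp add: cong_def)
qed

lemma CC_eq_image:
  "CC m n k x y = mu m n k x ` (\<lambda>z. (y * z) mod int m) ` Zm m"
  unfolding CC_def by blast

lemma mult_mod_image_Zm:
  assumes "coprime y (int m)" "0 < m"
  shows "(\<lambda>z. (y * z) mod int m) ` Zm m = Zm m"
proof
  show "(\<lambda>z. (y * z) mod int m) ` Zm m \<subseteq> Zm m"
    using assms(2) by (auto simp: Zm_def)
next
  obtain y' where y': "[y * y' = 1] (mod int m)"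
    using cong_solve_coprime_int[OF assms(1)] by blast
  show "Zm m \<subseteq> (\<lambda>z. (y * z) mod int m) ` Zm m"
  proof
    fix w assume "w \<in> Zm m"
    have "(y * ((y' * w) mod int m)) mod int m = ((y * y') * w) mod int m"
      by (simp add: mod_mult_right_eq mult.assoc)
    also have "\<dots> = w"
      using cong_mult[OF y' cong_refl, of w] \<open>w \<in> Zm m\<close> by (simp add: cong_def Zm_def)
    moreover have "(y' * w) mod int m \<in> Zm m"
      using assms(2) by (simp add: Zm_def)
    ultimately show "w \<in> (\<lambda>z. (y * z) mod int m) ` Zm m"
      by (metis image_eqI)
  qed
qed

lemma mu_at_b:
  assumes "0 < m" "1 < n"
  shows "mu m n k x y (0, 1) = ((- y * (int k - 1)) mod int m, 0)"
  using assms by (simp add: mu_def Gcar_def Zm_def)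

lemma coprime_if_CC_eq_CC_one:
  assumes "0 < m" "1 < n" "coprime (int k - 1) (int m)"
    and "CC m n k x y = CC m n k x 1"
  shows "coprime y (int m)"
proof -
  have "1 mod int m \<in> Zm m" using assms(1) by (simp add: Zm_def)
  then have "mu m n k x ((1 * (1 mod int m)) mod int m) \<in> CC m n k x 1"
    unfolding CC_def by blast
  moreover have "mu m n k x ((1 * (1 mod int m)) mod int m) = mu m n k x 1"
    by (rule mu_cong) (simp add: cong_def)
  ultimately obtain z where "mu m n k x 1 = mu m n k x ((y * z) mod int m)"
    using assms(4) unfolding CC_def by auto
  then have "(- 1 * (int k - 1)) mod int m = (- ((y * z) mod int m) * (int k - 1)) mod int m"
    using mu_at_b[OF assms(1,2)] by (metis prod.inject)
  then have "[- (int k - 1) = - ((y * z) mod int m * (int k - 1))] (mod int m)"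
    by (simp add: cong_def)
  then have "[(int k - 1) * 1 = (int k - 1) * ((y * z) mod int m)] (mod int m)"
    by (metis cong_minus_minus_iff mult.commute mult_1_right)
  then have "[1 = (y * z) mod int m] (mod int m)"
    using cong_mult_lcancel[OF assms(3)] by blast
  then have "[1 = y * z] (mod int m)"
    by (simp add: cong_def)
  then show ?thesis
    using cong_imp_coprime[of 1 "y * z" "int m"] by simp
qed

lemma CC_eq_CC_one_iff:
  assumes "0 < m" "1 < n \<or> m = 1" "coprime (int k - 1) (int m)"
  shows "CC m n k x y = CC m n k x 1 \<longleftrightarrow> coprime y (int m)"
proof
  assume "CC m n k x y = CC m n k x 1"
  with assms show "coprime y (int m)"
    using coprime_if_CC_eq_CC_one[OF assms(1) _ assms(3)] by (cases "m = 1") auto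
next
  assume "coprime y (int m)"
  with assms(1) show "CC m n k x y = CC m n k x 1"
    by (simp only: CC_eq_image mult_mod_image_Zm coprime_1_left)
qed

lemma family_complete_iff_unit_in_Yset:
  assumes "0 < m" "1 < n \<or> m = 1" "coprime (int k - 1) (int m)"
  shows "family_complete m n k S x \<longleftrightarrow> (\<exists>y\<in>Yset m S x. coprime y (int m))"
proof -
  have "family_complete m n k S x \<longleftrightarrow> (\<exists>y\<in>Yset m S x. CC m n k x y = CC m n k x 1)"
    unfolding family_complete_def family_def by blast
  then show ?thesis
    using CC_eq_CC_one_iff[OF assms] by simp
qed

lemma one_less_ord:
  fixes m k :: nat
  assumes "1 < m" "coprime m (k - 1)" "0 < ord m k"
  shows "1 < ord m k"
proof (rule ccontr)
  assume "\<not> 1 < ord m k"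
  with assms(3) have "ord m k = Suc 0" by linarith
  then have "[k = 1] (mod m)" by (rule ord_eq_Suc_0_iff[THEN iffD1])
  then have "m dvd k - 1" by (rule cong_to_1_nat)
  with assms(2) have "is_unit m"
    using coprime_common_divisor[of m "k - 1" m] by simp
  with assms(1) show False by simp
qed

theorem theorem4p10:
  fixes m n k :: nat and S :: "int set" and x :: int
  assumes "m > 0" "n > 0" "k > 0"
    and "gcd m (k - 1) = 1"
    and "n = ord m k"
    and "is_base m S"
    and "x \<in> semigen m S"
  shows "orb_basic m S x \<longleftrightarrow> family_complete m n k S x"
proof -
  have S: "S \<subseteq> Zm m" using assms(6) by (simp add: is_base_def)
  have coprime_nat: "coprime m (k - 1)" using assms(4) coprime_iff_gcd_eq_1 by blast
  then have "coprime (int (k - 1)) (int m)" using coprime_commute by auto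
  then have coprime_int: "coprime (int k - 1) (int m)" using assms(3) by (simp add: of_nat_diff)
  have n: "1 < n \<or> m = 1"
  proof (cases "m = 1")
    case False
    with assms(1) have "1 < m" by simp
    with one_less_ord[OF this coprime_nat] assms(2,5) show ?thesis by simp
  qed simp
  have "orb_basic m S x \<longleftrightarrow>
      (\<exists>s\<in>S. \<exists>u\<in>semigen m S. coprime u (int m) \<and> [x = s * u] (mod int m))"
    by (rule orb_basic_iff[OF S assms(1)])
  also have "\<dots> \<longleftrightarrow> (\<exists>y\<in>Yset m S x. coprime y (int m))"
    by (rule unit_in_Yset_iff[OF S assms(1), symmetric])
  also have "\<dots> \<longleftrightarrow> family_complete m n k S x"
    by (rule family_complete_iff_unit_in_Yset[OF assms(1) n coprime_int, symmetric])
  finally show ?thesis .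
qed

end
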